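(* Let $(V,o)$ be a normal surface singularity of degree $d\in\{2,3\}$ (i.e. $Z^2=-d$) with $p=p_f(V,o)>0$, where $Z$ is the fundamental cycle on the minimal resolution. Assume that $Z$ is essentially irreducible and $Z=Z_{min}$. Then $$p_a(V,o)=p_a\Big(\big(\big[\tfrac{p-1}{d}\big]+1\big)Z\Big)=\frac d2\Big(\frac{2p-2}{d}-\big[\tfrac{p-1}{d}\big]\Big)\Big(\big[\tfrac{p-1}{d}\big]+1\Big)+1.$$
   Context: $[a]=\max\{n\in\mathbb Z\mid n\le a\}$. Let $\pi\colon X\to V$ be the minimal resolution and $\pi^{-1}(o)=\bigcup_{i=1}^nE_i$ the irreducible components of the exceptional set. A cycle is $D=\sum d_iE_i$, $d_i\in\mathbb Z$; $D_1\le D_2$ is coefficientwise. $K$ is the canonical divisor of $X$; $p_a(D)=1+\frac12(D^2+D\cdot K)$ for $D>0$. The fundamental cycle $Z$ is the smallest cycle $D>0$ with support $\pi^{-1}(o)$ and $D\cdot E_i\le0$ for all $i$; $p_f(V,o)=p_a(Z)$; the degree is $-Z^2$; $p_a(V,o)=\max\{p_a(D)\mid D>0\text{ a cycle}\}$. $Z_{min}$ is the unique minimal cycle $0<Z_{min}\le Z$ with $p_a(Z_{min})=p_a(Z)$. A $(-2)$-curve is a smooth rational exceptional curve $E$ with $E^2=-2$. $Z$ is essentially irreducible if there is a component $A\le Z$ which is not a $(-2)$-curve such that, with $k$ the coefficient of $A$ in $Z$, either $Z=kA$ or all components of $Z-kA$ are $(-2)$-curves. *)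

theory Defs
  imports Complex_Main
begin

text \<open>Combinatorial data of the exceptional set of the minimal resolution:
  components indexed by a finite type 'e, intersection numbers M i j = E_i . E_j,
  arithmetic genera g i = p_a(E_i).\<close>

definition comp :: "'e \<Rightarrow> ('e \<Rightarrow> int)" where
  "comp i = (\<lambda>j. if j = i then 1 else 0)"

definition inter :: "('e::finite \<Rightarrow> 'e \<Rightarrow> int) \<Rightarrow> ('e \<Rightarrow> int) \<Rightarrow> ('e \<Rightarrow> int) \<Rightarrow> int" where
  "inter M D1 D2 = (\<Sum>i\<in>UNIV. \<Sum>j\<in>UNIV. D1 i * D2 j * M i j)"

text \<open>K . E_i via adjunction: p_a(E_i) = 1 + (E_i^2 + K.E_i)/2.\<close>
definition canonE :: "('e \<Rightarrow> 'e \<Rightarrow> int) \<Rightarrow> ('e \<Rightarrow> int) \<Rightarrow> 'e \<Rightarrow> int" where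
  "canonE M g i = 2 * g i - 2 - M i i"

definition canonD :: "('e::finite \<Rightarrow> 'e \<Rightarrow> int) \<Rightarrow> ('e \<Rightarrow> int) \<Rightarrow> ('e \<Rightarrow> int) \<Rightarrow> int" where
  "canonD M g D = (\<Sum>i\<in>UNIV. D i * canonE M g i)"

text \<open>p_a(D) = 1 + (D^2 + D.K)/2 (the numerator is always even).\<close>
definition pa :: "('e::finite \<Rightarrow> 'e \<Rightarrow> int) \<Rightarrow> ('e \<Rightarrow> int) \<Rightarrow> ('e \<Rightarrow> int) \<Rightarrow> int" where
  "pa M g D = 1 + (inter M D D + canonD M g D) div 2"

definition pos_cycle :: "('e \<Rightarrow> int) \<Rightarrow> bool" where
  "pos_cycle D \<longleftrightarrow> (\<forall>i. D i \<ge> 0) \<and> D \<noteq> (\<lambda>_. 0)"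

definition exc_config :: "('e::finite \<Rightarrow> 'e \<Rightarrow> int) \<Rightarrow> ('e \<Rightarrow> int) \<Rightarrow> bool" where
  "exc_config M g \<longleftrightarrow>
     (\<forall>i j. M i j = M j i) \<and> (\<forall>i j. i \<noteq> j \<longrightarrow> M i j \<ge> 0) \<and> (\<forall>i. g i \<ge> 0) \<and>
     (\<forall>D. D \<noteq> (\<lambda>_. 0) \<longrightarrow> inter M D D < 0) \<and>
     (\<forall>S. S \<noteq> {} \<and> S \<noteq> UNIV \<longrightarrow> (\<exists>i\<in>S. \<exists>j. j \<notin> S \<and> M i j > 0))"

text \<open>Minimality of the resolution: no smooth rational (-1)-curve.\<close>
definition minimal_res :: "('e \<Rightarrow> 'e \<Rightarrow> int) \<Rightarrow> ('e \<Rightarrow> int) \<Rightarrow> bool" where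
  "minimal_res M g \<longleftrightarrow> (\<forall>i. \<not> (g i = 0 \<and> M i i = -1))"

definition fundamental_cycle :: "('e::finite \<Rightarrow> 'e \<Rightarrow> int) \<Rightarrow> ('e \<Rightarrow> int) \<Rightarrow> bool" where
  "fundamental_cycle M Z \<longleftrightarrow>
     (\<forall>i. Z i > 0) \<and> (\<forall>i. inter M Z (comp i) \<le> 0) \<and>
     (\<forall>D. (\<forall>i. D i > 0) \<and> (\<forall>i. inter M D (comp i) \<le> 0) \<longrightarrow> (\<forall>i. Z i \<le> D i))"

definition minus2 :: "('e \<Rightarrow> 'e \<Rightarrow> int) \<Rightarrow> ('e \<Rightarrow> int) \<Rightarrow> 'e \<Rightarrow> bool" where
  "minus2 M g i \<longleftrightarrow> g i = 0 \<and> M i i = -2"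

definition ess_irreducible :: "('e \<Rightarrow> 'e \<Rightarrow> int) \<Rightarrow> ('e \<Rightarrow> int) \<Rightarrow> ('e \<Rightarrow> int) \<Rightarrow> bool" where
  "ess_irreducible M g Z \<longleftrightarrow>
     (\<exists>A. Z A > 0 \<and> \<not> minus2 M g A \<and>
        (let R = (\<lambda>j. Z j - Z A * comp A j) in
          R = (\<lambda>_. 0) \<or> (\<forall>j. R j > 0 \<longrightarrow> minus2 M g j)))"

definition is_Zmin :: "('e::finite \<Rightarrow> 'e \<Rightarrow> int) \<Rightarrow> ('e \<Rightarrow> int) \<Rightarrow> ('e \<Rightarrow> int) \<Rightarrow> bool" where
  "is_Zmin M g Z \<longleftrightarrow>
     (\<forall>D. pos_cycle D \<and> (\<forall>i. D i \<le> Z i) \<and> pa M g D = pa M g Z \<longrightarrow> D = Z)"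

definition sing_pa :: "('e::finite \<Rightarrow> 'e \<Rightarrow> int) \<Rightarrow> ('e \<Rightarrow> int) \<Rightarrow> int" where
  "sing_pa M g = Sup (pa M g ` {D. pos_cycle D})"

end

theory Submission
  imports Defs
begin

text \<open>Write \<open>d = -Z\<^sup>2\<close>, \<open>m = K\<cdot>Z\<close>, and let \<open>A\<close> be the component of \<open>Z\<close> that is not a
  (-2)-curve. Every other component \<open>E\<close> has \<open>K\<cdot>E = 0\<close> and also \<open>Z\<cdot>E = 0\<close>: \<open>Z\<cdot>E = -1\<close> would
  give \<open>p\<^sub>a(Z - E) = p\<^sub>a(Z)\<close>, contradicting \<open>Z = Z\<^sub>m\<^sub>i\<^sub>n\<close>, and \<open>Z\<cdot>E \<le> -2\<close> would make \<open>Z - E\<close>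
  anti-nef, contradicting the minimality of the fundamental cycle. So \<open>K\<close> is numerically
  \<open>-(m/d) Z\<close>, whence \<open>2(p\<^sub>a(D) - 1) = D\<^sup>2 - (m/d) Z\<cdot>D \<le> -(t\<^sup>2 + m t)/d \<le> m\<^sup>2/4d\<close> with
  \<open>t = Z\<cdot>D\<close>, by the Cauchy-Schwarz inequality \<open>(Z\<cdot>D)\<^sup>2 \<le> Z\<^sup>2 D\<^sup>2\<close> for the negative definite
  intersection form. For \<open>D = nZ\<close> the middle term is the parabola \<open>n m - n\<^sup>2 d\<close>; at the integer
  \<open>n\<close> nearest to its vertex \<open>m/2d = (p - 1)/d + 1/2\<close> it falls short of \<open>m\<^sup>2/4d\<close> by at most
  \<open>d/4 < 2\<close>, so no integer \<open>p\<^sub>a(D)\<close> can exceed \<open>p\<^sub>a(nZ)\<close>.\<close>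

lemma inter_comp_right: "inter M D (comp j) = (\<Sum>i\<in>UNIV. D i * M i j)"
  unfolding inter_def comp_def
  by (simp add: if_distrib[of "\<lambda>x. _ * x"] if_distrib[of "\<lambda>x. x * _"] cong: if_cong)

lemma inter_comp_comp: "inter M (comp i) (comp j) = M i j"
  unfolding inter_comp_right by (simp add: comp_def if_distrib[of "\<lambda>x. x * _"] cong: if_cong)

lemma inter_eq_sum_comp_right: "inter M D E = (\<Sum>j\<in>UNIV. E j * inter M D (comp j))"
  unfolding inter_comp_right unfolding inter_def
  by (subst sum.swap) (simp add: sum_distrib_left algebra_simps)

lemma inter_commute: "(\<And>i j. M i j = M j i) \<Longrightarrow> inter M D E = inter M E D"
  unfolding inter_def by (subst sum.swap) (simp add: algebra_simps)

lemma inter_linear_left: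
  "inter M (\<lambda>i. x * D i + y * E i) F = x * inter M D F + y * inter M E F"
  unfolding inter_def by (simp add: algebra_simps sum.distrib sum_distrib_left)

lemma inter_linear_right:
  "inter M F (\<lambda>i. x * D i + y * E i) = x * inter M F D + y * inter M F E"
  unfolding inter_def by (simp add: algebra_simps sum.distrib sum_distrib_left)

lemma inter_self_linear:
  assumes "\<And>i j. M i j = M j i"
  shows "inter M (\<lambda>i. x * D i + y * E i) (\<lambda>i. x * D i + y * E i)
     = x * x * inter M D D + 2 * x * y * inter M D E + y * y * inter M E E"
  using inter_commute[of M E D, OF assms]
  by (simp add: inter_linear_left inter_linear_right algebra_simps)

lemma inter_self_scale: "inter M (\<lambda>i. n * D i) (\<lambda>i. n * D i) = n * n * inter M D D"
  unfolding inter_def by (simp add: sum_distrib_left algebra_simps)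

lemma canonD_linear: "canonD M g (\<lambda>i. x * D i + y * E i) = x * canonD M g D + y * canonD M g E"
  unfolding canonD_def by (simp add: algebra_simps sum.distrib sum_distrib_left)

lemma canonD_scale: "canonD M g (\<lambda>i. n * D i) = n * canonD M g D"
  unfolding canonD_def by (simp add: sum_distrib_left algebra_simps)

lemma canonD_comp: "canonD M g (comp j) = canonE M g j"
  unfolding canonD_def comp_def by (simp add: if_distrib[of "\<lambda>x. x * _"] cong: if_cong)

lemma inter_eq_single_component:
  assumes "\<And>j. j \<noteq> A \<Longrightarrow> inter M Z (comp j) = 0"
  shows "inter M Z D = D A * inter M Z (comp A)"
proof -
  have "inter M Z D = (\<Sum>j\<in>UNIV. if j = A then D A * inter M Z (comp A) else 0)"
    unfolding inter_eq_sum_comp_right[of M Z D] by (rule sum.cong) (auto simp: assms)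
  then show ?thesis by simp
qed

lemma canonD_eq_single_component:
  assumes "\<And>j. j \<noteq> A \<Longrightarrow> canonE M g j = 0"
  shows "canonD M g D = D A * canonE M g A"
proof -
  have "canonD M g D = (\<Sum>j\<in>UNIV. if j = A then D A * canonE M g A else 0)"
    unfolding canonD_def by (rule sum.cong) (auto simp: assms)
  then show ?thesis by simp
qed

lemma even_sum_symmetric_off_diagonal:
  assumes "finite S" "\<And>i j. f i j = f j i"
  shows "even ((\<Sum>i\<in>S. \<Sum>j\<in>S. f i j) - (\<Sum>i\<in>S. f i i :: int))"
  using assms(1)
proof (induction S rule: finite_induct)
  case empty then show ?case by simp
next
  case (insert x S)
  have "(\<Sum>i\<in>insert x S. \<Sum>j\<in>insert x S. f i j) - (\<Sum>i\<in>insert x S. f i i)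
      = ((\<Sum>i\<in>S. \<Sum>j\<in>S. f i j) - (\<Sum>i\<in>S. f i i)) + 2 * (\<Sum>j\<in>S. f x j)"
    using insert(1,2) assms(2) by (simp add: sum.distrib algebra_simps)
  then show ?case using insert(3) by simp
qed

lemma even_inter_self_add_canonD:
  assumes "\<And>i j. M i j = M j i"
  shows "even (inter M D D + canonD M g D)"
proof -
  have off_diagonal: "even (inter M D D - (\<Sum>i\<in>UNIV. D i * D i * M i i))"
    unfolding inter_def using even_sum_symmetric_off_diagonal[of UNIV "\<lambda>i j. D i * D j * M i j"]
    by (simp add: assms algebra_simps)
  have diagonal: "even (\<Sum>i\<in>UNIV. D i * D i * M i i + D i * canonE M g i)"
  proof (rule dvd_sum)
    fix i
    have "D i * D i * M i i + D i * canonE M g i = (D i * (D i - 1)) * M i i + 2 * (D i * (g i - 1))"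
      unfolding canonE_def by (simp add: algebra_simps)
    then show "even (D i * D i * M i i + D i * canonE M g i)" by simp
  qed
  have "inter M D D + canonD M g D = (inter M D D - (\<Sum>i\<in>UNIV. D i * D i * M i i))
      + (\<Sum>i\<in>UNIV. D i * D i * M i i + D i * canonE M g i)"
    unfolding canonD_def by (simp add: sum.distrib)
  then show ?thesis using off_diagonal diagonal by simp
qed

lemma double_pa:
  assumes "\<And>i j. M i j = M j i"
  shows "2 * (pa M g D - 1) = inter M D D + canonD M g D"
  using even_inter_self_add_canonD[of M D g, OF assms] unfolding pa_def by fastforce

lemma double_pa_multiple:
  assumes "\<And>i j. M i j = M j i"
  shows "2 * (pa M g (\<lambda>i. (q + 1) * Z i) - 1) = (q + 1) * (2 * (pa M g Z - 1) + q * inter M Z Z)"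
proof -
  have "2 * (pa M g (\<lambda>i. (q + 1) * Z i) - 1) = (q + 1) * (q + 1) * inter M Z Z + (q + 1) * canonD M g Z"
    unfolding double_pa[OF assms] inter_self_scale canonD_scale ..
  then show ?thesis unfolding double_pa[OF assms] by (simp add: algebra_simps)
qed

lemma exc_config_sym: "exc_config M g \<Longrightarrow> M i j = M j i"
  unfolding exc_config_def by simp

lemma exc_config_off_diagonal: "exc_config M g \<Longrightarrow> i \<noteq> j \<Longrightarrow> M i j \<ge> 0"
  unfolding exc_config_def by simp

lemma exc_config_inter_self_neg: "exc_config M g \<Longrightarrow> D \<noteq> (\<lambda>_. 0) \<Longrightarrow> inter M D D < 0"
  unfolding exc_config_def by simp

lemma exc_config_inter_self_nonpos: "exc_config M g \<Longrightarrow> inter M D D \<le> 0"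
  by (cases "D = (\<lambda>_. 0)") (auto simp: inter_def dest: exc_config_inter_self_neg)

lemma exc_config_connected:
  "exc_config M g \<Longrightarrow> S \<noteq> {} \<Longrightarrow> S \<noteq> UNIV \<Longrightarrow> \<exists>i\<in>S. \<exists>j. j \<notin> S \<and> M i j > 0"
  unfolding exc_config_def by simp

lemma inter_cauchy_schwarz:
  assumes "exc_config M g"
  shows "(inter M D E)\<^sup>2 \<le> inter M D D * inter M E E"
proof (cases "E = (\<lambda>_. 0)")
  case True
  then show ?thesis by (simp add: inter_def)
next
  case False
  define e t where "e = inter M E E" and "t = inter M D E"
  have "e < 0" unfolding e_def using exc_config_inter_self_neg[OF assms False] .
  have "inter M (\<lambda>i. e * D i + (- t) * E i) (\<lambda>i. e * D i + (- t) * E i)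
      = e * (e * inter M D D - t\<^sup>2)"
    unfolding inter_self_linear[OF exc_config_sym[OF assms]] e_def t_def
    by (simp add: power2_eq_square algebra_simps)
  moreover have "inter M (\<lambda>i. e * D i + (- t) * E i) (\<lambda>i. e * D i + (- t) * E i) \<le> 0"
    by (rule exc_config_inter_self_nonpos[OF assms])
  ultimately have "t\<^sup>2 \<le> e * inter M D D"
    using \<open>e < 0\<close> by (simp add: mult_le_0_iff)
  then show ?thesis unfolding e_def t_def by (simp add: mult.commute)
qed

lemma anti_nef_full_support:
  assumes ex: "exc_config M g" and nonneg: "\<And>i. D i \<ge> 0" and nonzero: "D \<noteq> (\<lambda>_. 0)"
    and anti_nef: "\<And>i. inter M D (comp i) \<le> 0"
  shows "D i > 0"
proof (rule ccontr)
  assume "\<not> D i > 0"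
  then have "{i. D i = 0} \<noteq> {}" using nonneg[of i] by force
  moreover have "{i. D i = 0} \<noteq> UNIV" using nonzero by auto
  ultimately obtain k j where k: "D k = 0" and j: "D j \<noteq> 0" and "M k j > 0"
    using exc_config_connected[OF ex, of "{i. D i = 0}"] by auto
  then have pos: "D j * M j k > 0"
    using nonneg[of j] exc_config_sym[OF ex, of j k] by simp
  have "D j * M j k \<le> (\<Sum>i\<in>UNIV. D i * M i k)"
  proof (rule member_le_sum)
    fix i assume "i \<in> UNIV - {j}"
    then show "0 \<le> D i * M i k"
      using k nonneg[of i] exc_config_off_diagonal[OF ex, of i k] by (cases "i = k") auto
  qed auto
  with pos show False using anti_nef[of k] unfolding inter_comp_right by linarith
qed

lemma fundamental_cycle_pos: "fundamental_cycle M Z \<Longrightarrow> Z i > 0"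
  unfolding fundamental_cycle_def by simp

lemma fundamental_cycle_anti_nef: "fundamental_cycle M Z \<Longrightarrow> inter M Z (comp i) \<le> 0"
  unfolding fundamental_cycle_def by simp

lemma fundamental_cycle_least:
  "fundamental_cycle M Z \<Longrightarrow> (\<And>i. D i > 0) \<Longrightarrow> (\<And>i. inter M D (comp i) \<le> 0) \<Longrightarrow> Z i \<le> D i"
  unfolding fundamental_cycle_def by simp

lemma is_ZminD:
  "is_Zmin M g Z \<Longrightarrow> pos_cycle D \<Longrightarrow> (\<And>i. D i \<le> Z i) \<Longrightarrow> pa M g D = pa M g Z \<Longrightarrow> D = Z"
  unfolding is_Zmin_def by simp

lemma fundamental_cycle_inter_minus2_eq_0:
  assumes ex: "exc_config M g" and fc: "fundamental_cycle M Z" and zmin: "is_Zmin M g Z"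
    and j: "minus2 M g j" and "Z \<noteq> comp j"
  shows "inter M Z (comp j) = 0"
proof -
  note Zpos = fundamental_cycle_pos[OF fc] and Znef = fundamental_cycle_anti_nef[OF fc]
  define D where "D = (\<lambda>i. 1 * Z i + (-1) * comp j i)"
  have D_le: "D i \<le> Z i" and D_nonneg: "D i \<ge> 0" for i
    using Zpos[of i] unfolding D_def comp_def by auto
  have D_j: "D j < Z j" unfolding D_def comp_def by simp
  have D_nonzero: "D \<noteq> (\<lambda>_. 0)"
  proof
    assume D0: "D = (\<lambda>_. 0)"
    have "Z i = comp j i" for i using fun_cong[OF D0, of i] by (simp add: D_def)
    with \<open>Z \<noteq> comp j\<close> show False by blast
  qed
  have Mjj: "M j j = -2" and Kj: "canonE M g j = 0"
    using j unfolding minus2_def canonE_def by simp_all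
  have DE: "inter M D (comp i) = inter M Z (comp i) - M j i" for i
    unfolding D_def inter_linear_left inter_comp_comp by simp
  have "inter M Z (comp j) \<noteq> -1"
  proof
    assume "inter M Z (comp j) = -1"
    then have "inter M D D = inter M Z Z" and "canonD M g D = canonD M g Z"
      unfolding D_def inter_self_linear[OF exc_config_sym[OF ex]] inter_comp_comp
        canonD_linear canonD_comp
      using Mjj Kj by simp_all
    then have "pa M g D = pa M g Z" unfolding pa_def by simp
    moreover have "pos_cycle D" unfolding pos_cycle_def using D_nonneg D_nonzero by simp
    ultimately have "D = Z" using is_ZminD[OF zmin _ D_le] by simp
    with D_j show False by simp
  qed
  moreover have "\<not> inter M Z (comp j) \<le> -2"
  proof
    assume "inter M Z (comp j) \<le> -2"
    then have D_anti_nef: "inter M D (comp i) \<le> 0" for i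
      using DE[of i] Mjj Znef[of i] exc_config_off_diagonal[OF ex, of j i] by (cases "i = j") auto
    then have "Z j \<le> D j"
      using fundamental_cycle_least[OF fc] anti_nef_full_support[OF ex D_nonneg D_nonzero] by blast
    with D_j show False by simp
  qed
  ultimately show ?thesis using Znef[of j] by linarith
qed

lemma ess_irreducible_canonical_proportional:
  assumes ex: "exc_config M g" and fc: "fundamental_cycle M Z" and zmin: "is_Zmin M g Z"
    and "ess_irreducible M g Z"
  shows "inter M Z Z * canonD M g D = canonD M g Z * inter M Z D"
proof -
  note Zpos = fundamental_cycle_pos[OF fc]
  from assms(4) obtain A where
    rest: "(\<lambda>j. Z j - Z A * comp A j) = (\<lambda>_. 0) \<or> (\<forall>j. Z j - Z A * comp A j > 0 \<longrightarrow> minus2 M g j)"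
    unfolding ess_irreducible_def Let_def by blast
  have others: "minus2 M g j" if "j \<noteq> A" for j
  proof -
    have pos: "Z j - Z A * comp A j > 0" using that Zpos[of j] by (simp add: comp_def)
    from rest show ?thesis
    proof
      assume R0: "(\<lambda>j. Z j - Z A * comp A j) = (\<lambda>_. 0)"
      have "Z j - Z A * comp A j = 0" using fun_cong[OF R0, of j] by simp
      with pos show ?thesis by simp
    qed (use pos in blast)
  qed
  have Z_E: "inter M Z (comp j) = 0" and K_E: "canonE M g j = 0" if "j \<noteq> A" for j
  proof -
    have "comp j A = 0" using that by (simp add: comp_def)
    with Zpos[of A] have "Z \<noteq> comp j" by auto
    with others[OF that] show "inter M Z (comp j) = 0"
      by (rule fundamental_cycle_inter_minus2_eq_0[OF ex fc zmin])
    show "canonE M g j = 0" using others[OF that] by (simp add: minus2_def canonE_def)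
  qed
  have Z_D: "inter M Z E = E A * inter M Z (comp A)" for E
    by (rule inter_eq_single_component) (rule Z_E)
  have K_D: "canonD M g E = E A * canonE M g A" for E
    by (rule canonD_eq_single_component) (rule K_E)
  show ?thesis unfolding Z_D[of Z] Z_D[of D] K_D[of Z] K_D[of D] by (simp add: algebra_simps)
qed

lemma pa_bound_of_canonical_proportional:
  assumes ex: "exc_config M g"
    and proportional: "\<And>D. inter M Z Z * canonD M g D = canonD M g Z * inter M Z D"
  shows "8 * (- inter M Z Z) * (pa M g D - 1) \<le> (canonD M g Z)\<^sup>2"
proof -
  define d m t X where "d = - inter M Z Z" and "m = canonD M g Z"
    and "t = inter M Z D" and "X = inter M D D"
  have "t\<^sup>2 \<le> - d * X"
    using inter_cauchy_schwarz[OF ex, of Z D] unfolding d_def t_def X_def by simp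
  moreover have "d * canonD M g D = - m * t"
    using proportional[of D] unfolding d_def m_def t_def by simp
  moreover have "2 * (pa M g D - 1) = X + canonD M g D"
    unfolding X_def by (rule double_pa[OF exc_config_sym[OF ex]])
  ultimately have "2 * d * (pa M g D - 1) \<le> - t\<^sup>2 - m * t"
    by (simp add: algebra_simps)
  then have "8 * d * (pa M g D - 1) \<le> m\<^sup>2 - (2 * t + m)\<^sup>2"
    by (simp add: power2_eq_square algebra_simps)
  then show ?thesis using zero_le_power2[of "2 * t + m"] unfolding d_def m_def by linarith
qed

text \<open>\<open>x div d + 1\<close> is the integer nearest to the vertex \<open>(2x + d)/2d\<close> of the parabola
  \<open>u \<mapsto> u(2x + d) - d u\<^sup>2\<close>; its value there misses the maximum \<open>(2x + d)\<^sup>2/4d\<close> by at most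
  \<open>d/4\<close>.\<close>

lemma parabola_at_nearest_integer_to_vertex:
  fixes d x :: int
  assumes "0 < d"
  shows "(2 * x + d)\<^sup>2 \<le> 4 * d * ((x div d + 1) * (2 * x + d - (x div d + 1) * d)) + d\<^sup>2"
proof -
  define q r where "q = x div d" and "r = x mod d"
  have x: "x = d * q + r" unfolding q_def r_def by simp
  have "0 \<le> r" "r < d" unfolding r_def using assms by simp_all
  then have "0 \<le> 4 * r * (d - r)" by simp
  also have "4 * r * (d - r) = 4 * d * ((q + 1) * (2 * x + d - (q + 1) * d)) + d\<^sup>2 - (2 * x + d)\<^sup>2"
    unfolding x by (simp add: power2_eq_square algebra_simps)
  finally show ?thesis unfolding q_def by simp
qed

lemma sing_pa_eq_pa_multiple_of_canonical_proportional:
  assumes ex: "exc_config M g" and Z_pos: "\<And>i. Z i > 0" and "pa M g Z \<ge> 1"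
    and proportional: "\<And>D. inter M Z Z * canonD M g D = canonD M g Z * inter M Z D"
    and "0 < - inter M Z Z" and "- inter M Z Z < 8"
  shows "sing_pa M g = pa M g (\<lambda>i. ((pa M g Z - 1) div (- inter M Z Z) + 1) * Z i)"
proof -
  define d p m where "d = - inter M Z Z" and "p = pa M g Z" and "m = canonD M g Z"
  define q where "q = (p - 1) div d"
  define V where "V = pa M g (\<lambda>i. (q + 1) * Z i)"
  have "d > 0" "d < 8" "p \<ge> 1" using assms(3,5,6) unfolding d_def p_def by simp_all
  have m: "m = 2 * (p - 1) + d"
    using double_pa[OF exc_config_sym[OF ex], where D = Z] unfolding p_def m_def d_def by simp
  have "pa M g D \<le> V" for D
  proof -
    have "8 * d * (pa M g D - 1) \<le> m\<^sup>2"
      using pa_bound_of_canonical_proportional[OF ex proportional] unfolding m_def d_def .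
    also have "\<dots> \<le> 4 * d * (2 * (V - 1)) + d\<^sup>2"
      using parabola_at_nearest_integer_to_vertex[OF \<open>d > 0\<close>, of "p - 1"]
      unfolding V_def double_pa_multiple[OF exc_config_sym[OF ex]] m q_def p_def d_def
      by (simp add: algebra_simps)
    finally have "d * (8 * (pa M g D - 1)) \<le> d * (8 * (V - 1) + d)"
      by (simp add: power2_eq_square algebra_simps)
    with \<open>d > 0\<close> \<open>d < 8\<close> show ?thesis by (simp add: mult_le_cancel_left_pos)
  qed
  moreover have "pos_cycle (\<lambda>i. (q + 1) * Z i)"
  proof -
    have "q \<ge> 0" unfolding q_def using \<open>d > 0\<close> \<open>p \<ge> 1\<close> by (simp add: pos_imp_zdiv_nonneg_iff)
    then have "(q + 1) * Z i > 0" for i using Z_pos[of i] by simp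
    then show ?thesis unfolding pos_cycle_def by (metis less_imp_le less_irrefl)
  qed
  ultimately have "sing_pa M g = V"
    unfolding sing_pa_def V_def by (intro cSup_eq_maximum) auto
  then show ?thesis unfolding V_def q_def p_def d_def .
qed

lemma of_int_pa_multiple:
  assumes "\<And>i j. M i j = M j i" and "d = - inter M Z Z" and "d \<noteq> 0"
  shows "real_of_int (pa M g (\<lambda>i. (q + 1) * Z i)) = real_of_int d / 2
      * ((2 * real_of_int (pa M g Z) - 2) / real_of_int d - real_of_int q) * (real_of_int q + 1) + 1"
proof -
  define w where "w = (q + 1) * (2 * (pa M g Z - 1) - q * d)"
  have "2 * (pa M g (\<lambda>i. (q + 1) * Z i) - 1) = w"
    using double_pa_multiple[OF assms(1)] unfolding w_def assms(2) by simp
  then have "2 * (real_of_int (pa M g (\<lambda>i. (q + 1) * Z i)) - 1) = real_of_int w"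
    using arg_cong[of _ _ real_of_int] by fastforce
  moreover have "real_of_int d / 2 * ((2 * real_of_int (pa M g Z) - 2) / real_of_int d
      - real_of_int q) * (real_of_int q + 1) = real_of_int w / 2"
    unfolding w_def using assms(3) by (simp add: field_simps)
  ultimately show ?thesis by simp
qed

theorem lemma3p12:
  fixes M :: "'e::finite \<Rightarrow> 'e \<Rightarrow> int" and g :: "'e \<Rightarrow> int"
    and Z :: "'e \<Rightarrow> int" and d :: int
  assumes "exc_config M g" and "minimal_res M g"
    and "fundamental_cycle M Z"
    and "d = - inter M Z Z" and "d \<in> {2, 3}"
    and "pa M g Z > 0"
    and "ess_irreducible M g Z"
    and "is_Zmin M g Z"
  shows "sing_pa M g = pa M g (\<lambda>i. (\<lfloor>real_of_int (pa M g Z - 1) / real_of_int d\<rfloor> + 1) * Z i)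
    \<and> real_of_int (pa M g (\<lambda>i. (\<lfloor>real_of_int (pa M g Z - 1) / real_of_int d\<rfloor> + 1) * Z i))
      = real_of_int d / 2
        * ((2 * real_of_int (pa M g Z) - 2) / real_of_int d
           - real_of_int \<lfloor>real_of_int (pa M g Z - 1) / real_of_int d\<rfloor>)
        * (real_of_int \<lfloor>real_of_int (pa M g Z - 1) / real_of_int d\<rfloor> + 1) + 1"
proof -
  define q where "q = (pa M g Z - 1) div d"
  have "0 < d" "d < 8" using assms(5) by auto
  have "sing_pa M g = pa M g (\<lambda>i. (q + 1) * Z i)"
    using sing_pa_eq_pa_multiple_of_canonical_proportional[OF assms(1)
        fundamental_cycle_pos[OF assms(3)] _ ess_irreducible_canonical_proportional[OF assms(1,3,8,7)]]
      assms(4,6) \<open>0 < d\<close> \<open>d < 8\<close>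
    unfolding q_def by simp
  moreover have "\<lfloor>real_of_int (pa M g Z - 1) / real_of_int d\<rfloor> = q"
    unfolding q_def by (rule floor_divide_of_int_eq)
  ultimately show ?thesis
    using of_int_pa_multiple[OF exc_config_sym[OF assms(1)] assms(4)] \<open>0 < d\<close> by simp
qed

end
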